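(* Let $N \geq 5$ be an odd integer and $\kappa$ a real number. Let $a>0$ and $b$ be real numbers such that the data set $(X_1,\dots,X_N)$ consisting of $X_1 = a$, of $\tfrac{N-1}{2}$ points equal to $b - \tfrac{a}{N-1}$, and of $\tfrac{N-1}{2}$ points equal to $-b - \tfrac{a}{N-1}$ satisfies $\mathbb{E}(X)=0$, $\mathbb{E}(X^2)=1$ and $\mathbb{E}(X^4)=\kappa$. Then $$\mathbb{E}(X^3) = \frac{-3}{N-1}\, a + \frac{N+1}{(N-1)^2}\, a^3 .$$ Furthermore, when $a = a(N,\kappa) = \sqrt{ \frac{N-1}{N+1} + \sqrt{ ( \frac{N-1}{N+1} )^2 - G(N,\kappa)}}$ with $G(N,\kappa) = \frac{N(N-1)^2 - (N-1)^3 \kappa}{(N+1)(N-3)}$ and $\kappa>1$ fixed, one has $\mathbb{E}(X^3) \sim -3 (\kappa - 1)^{1/4} N^{-3/4} + (\kappa - 1)^{3/4} N^{-1/4}$ as $N \to \infty$.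
   Context: For a finite data set $(X_1,\dots,X_N)$ and a function $f$, $\mathbb{E}(f(X))$ denotes the empirical mean $\frac1N\sum_{i=1}^N f(X_i)$. *)

theory Defs
  imports "HOL-Library.Landau_Symbols"
begin

definition emp_mean :: "(real \<Rightarrow> real) \<Rightarrow> real list \<Rightarrow> real" where
  "emp_mean f xs = (\<Sum>x\<leftarrow>xs. f x) / real (length xs)"

definition data_set :: "nat \<Rightarrow> real \<Rightarrow> real \<Rightarrow> real list" where
  "data_set N a b =
     a # replicate ((N - 1) div 2) (b - a / real (N - 1))
       @ replicate ((N - 1) div 2) (- b - a / real (N - 1))"

definition G_fun :: "nat \<Rightarrow> real \<Rightarrow> real" where
  "G_fun N \<kappa> = (real N * (real N - 1)^2 - (real N - 1)^3 * \<kappa>)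
                 / ((real N + 1) * (real N - 3))"

definition a_fun :: "nat \<Rightarrow> real \<Rightarrow> real" where
  "a_fun N \<kappa> = sqrt ((real N - 1) / (real N + 1)
        + sqrt (((real N - 1) / (real N + 1))^2 - G_fun N \<kappa>))"

end

theory Submission
  imports Defs "HOL-Real_Asymp.Real_Asymp"
begin

text \<open>Writing \<open>N = 2m + 1\<close> and \<open>c = a / (2m)\<close>, the data set is automatically centred, and the
  second moment \<open>a\<^sup>2 + 2m (b\<^sup>2 + c\<^sup>2) = N\<close> determines \<open>b\<^sup>2\<close>; the third moment
  \<open>a\<^sup>3 - 6 m c b\<^sup>2 - 2 m c\<^sup>3\<close> is even in \<open>b\<close>, so substituting \<open>b\<^sup>2\<close> gives the closed form.

  For the asymptotics put \<open>\<kappa> = 1 + q\<close>: the numerator of \<open>G(N, \<kappa>)\<close> is \<open>(N - 1)\<^sup>2 - q (N - 1)\<^sup>3\<close>,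
  so \<open>G \<sim> -q N\<close> and \<open>a(N, \<kappa>)\<^sup>4 \<sim> q N\<close>. In the closed form the cubic term is then
  \<open>\<sim> q\<^bsup>3/4\<^esup> N\<^bsup>-1/4\<^esup>\<close>, while the linear term is \<open>O(N\<^bsup>-3/4\<^esup>)\<close>; the same holds for the claimed
  asymptotic expression, so both are equivalent to \<open>q\<^bsup>3/4\<^esup> N\<^bsup>-1/4\<^esup>\<close>.\<close>

lemma sum_list_data_set:
  fixes f :: "real \<Rightarrow> real"
  shows "(\<Sum>x\<leftarrow>data_set N a b. f x)
           = f a + real ((N - 1) div 2) * (f (b - a / real (N - 1)) + f (- b - a / real (N - 1)))"
  by (simp add: data_set_def sum_list_replicate algebra_simps)

lemma length_data_set: "odd N \<Longrightarrow> length (data_set N a b) = N"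
  by (elim oddE) (simp add: data_set_def)

lemma emp_mean_cube_data_set:
  assumes "odd N" "N > 1" and second_moment: "emp_mean (\<lambda>x. x^2) (data_set N a b) = 1"
  shows "emp_mean (\<lambda>x. x^3) (data_set N a b)
           = (-3) / (real N - 1) * a + (real N + 1) / (real N - 1)^2 * a^3"
proof -
  obtain m where N: "N = 2 * m + 1" and m_pos: "real m > 0"
    using assms(1,2) by (elim oddE) auto
  define c where "c = a / (2 * real m)"
  have mean: "emp_mean f (data_set N a b) = (f a + m * (f (b - c) + f (- b - c))) / (2 * real m + 1)"
    for f :: "real \<Rightarrow> real"
    unfolding emp_mean_def length_data_set [OF \<open>odd N\<close>] by (simp add: sum_list_data_set N c_def)
  have b_sq: "2 * real m * b^2 = 2 * real m + 1 - a^2 - 2 * real m * c^2"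
    using second_moment by (simp add: mean field_simps power2_eq_square)
  have eliminated: "a^3 - 3 * c * (2 * real m + 1 - a^2 - 2 * real m * c^2) - 2 * real m * c^3
      = (2 * real m + 1) * ((-3) / (2 * real m) * a + (2 * real m + 2) / (2 * real m)^2 * a^3)"
    using m_pos by (simp add: c_def field_simps power2_eq_square power3_eq_cube)
  have "emp_mean (\<lambda>x. x^3) (data_set N a b)
      = (a^3 - 3 * c * (2 * real m * b^2) - 2 * real m * c^3) / (2 * real m + 1)"
    by (simp add: mean power2_eq_square power3_eq_cube algebra_simps)
  also have "\<dots>
      = (a^3 - 3 * c * (2 * real m + 1 - a^2 - 2 * real m * c^2) - 2 * real m * c^3) / (2 * real m + 1)"
    by (simp only: b_sq)
  also have "\<dots> = (-3) / (2 * real m) * a + (2 * real m + 2) / (2 * real m)^2 * a^3"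
    unfolding eliminated by (simp add: add_pos_pos m_pos)
  also have "\<dots> = (-3) / (real N - 1) * a + (real N + 1) / (real N - 1)^2 * a^3"
    by (simp add: N)
  finally show ?thesis .
qed

lemma sqrt_sqrt_eq_powr: "x \<ge> 0 \<Longrightarrow> sqrt (sqrt x) = x powr (1/4)"
  by (simp add: powr_half_sqrt [symmetric] powr_powr)

lemma a_fun_asymp_equiv:
  assumes "\<kappa> > 1"
  shows "(\<lambda>N. a_fun N \<kappa>) \<sim>[at_top] (\<lambda>N. (\<kappa> - 1) powr (1/4) * real N powr (1/4))"
proof -
  define q where "q = \<kappa> - 1"
  have "q > 0" and \<kappa>: "\<kappa> = 1 + q"
    using assms by (simp_all add: q_def)
  have "(\<lambda>N. a_fun N \<kappa>) \<sim>[at_top] (\<lambda>N. sqrt (sqrt (q * real N)))"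
    unfolding a_fun_def G_fun_def \<kappa> using \<open>q > 0\<close> by real_asymp
  also have "(\<lambda>N. sqrt (sqrt (q * real N))) = (\<lambda>N. q powr (1/4) * real N powr (1/4))"
    using \<open>q > 0\<close> by (simp add: sqrt_sqrt_eq_powr powr_mult)
  finally show ?thesis
    by (simp add: q_def)
qed

lemma third_moment_formula_asymp_equiv:
  fixes a :: "nat \<Rightarrow> real"
  assumes "s > 0" and a: "a \<sim>[at_top] (\<lambda>N. s * real N powr (1/4))"
  shows "(\<lambda>N. (-3) / (real N - 1) * a N + (real N + 1) / (real N - 1)^2 * a N ^ 3)
           \<sim>[at_top] (\<lambda>N. -3 * s * real N powr (-3/4) + s^3 * real N powr (-1/4))"
proof -
  define g where "g = (\<lambda>N::nat. s^3 * real N powr (-1/4))"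
  have "(\<lambda>N. (real N + 1) / (real N - 1)^2 * a N ^ 3)
          \<sim>[at_top] (\<lambda>N. 1 / real N * (s * real N powr (1/4))^3)"
    by (intro asymp_equiv_mult asymp_equiv_power a) real_asymp
  also have "(\<lambda>N. 1 / real N * (s * real N powr (1/4))^3) \<sim>[at_top] g"
    unfolding g_def using \<open>s > 0\<close> by real_asymp
  finally have cubic: "(\<lambda>N. (real N + 1) / (real N - 1)^2 * a N ^ 3) \<sim>[at_top] g" .
  have "(\<lambda>N. (-3) / (real N - 1) * a N) \<in> O(\<lambda>N. (-3) / (real N - 1) * (s * real N powr (1/4)))"
    by (intro asymp_equiv_imp_bigo asymp_equiv_mult asymp_equiv_refl a)
  also have "(\<lambda>N. (-3) / (real N - 1) * (s * real N powr (1/4))) \<in> o(g)"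
    unfolding g_def using \<open>s > 0\<close> by real_asymp
  finally have linear: "(\<lambda>N. (-3) / (real N - 1) * a N) \<in> o(g)" .
  have lower_order: "(\<lambda>N. -3 * s * real N powr (-3/4)) \<in> o(g)"
    unfolding g_def using \<open>s > 0\<close> by real_asymp
  have lhs: "(\<lambda>N. (-3) / (real N - 1) * a N + (real N + 1) / (real N - 1)^2 * a N ^ 3) \<sim>[at_top] g"
    using cubic by (subst asymp_equiv_add_left [OF linear])
  have rhs: "(\<lambda>N. -3 * s * real N powr (-3/4) + s^3 * real N powr (-1/4)) \<sim>[at_top] g"
    by (subst asymp_equiv_add_left [OF lower_order]) (simp add: g_def)
  show ?thesis
    using asymp_equiv_trans [OF lhs asymp_equiv_symI [OF rhs]] .
qed

lemma emp_mean_cube_data_set_a_fun_asymp_equiv: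
  fixes b :: "nat \<Rightarrow> real"
  assumes "\<kappa> > 1"
    and second_moment: "\<forall>\<^sub>F k in at_top.
      emp_mean (\<lambda>x. x^2) (data_set (2*k+1) (a_fun (2*k+1) \<kappa>) (b (2*k+1))) = 1"
  shows "(\<lambda>k. emp_mean (\<lambda>x. x^3) (data_set (2*k+1) (a_fun (2*k+1) \<kappa>) (b (2*k+1))))
           \<sim>[at_top] (\<lambda>k. -3 * (\<kappa> - 1) powr (1/4) * real (2*k+1) powr (-3/4)
                          + (\<kappa> - 1) powr (3/4) * real (2*k+1) powr (-1/4))"
proof -
  define s where "s = (\<kappa> - 1) powr (1/4)"
  have "s > 0"
    using assms(1) by (simp add: s_def)
  have s_cube: "s^3 = (\<kappa> - 1) powr (3/4)"
    unfolding s_def using assms(1) by (subst powr_power) auto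
  have "(\<lambda>N. (-3) / (real N - 1) * a_fun N \<kappa> + (real N + 1) / (real N - 1)^2 * a_fun N \<kappa> ^ 3)
          \<sim>[at_top] (\<lambda>N. -3 * s * real N powr (-3/4) + s^3 * real N powr (-1/4))"
    using third_moment_formula_asymp_equiv [OF \<open>s > 0\<close> a_fun_asymp_equiv [OF assms(1), folded s_def]] .
  then have "(\<lambda>k. (-3) / (real (2*k+1) - 1) * a_fun (2*k+1) \<kappa>
                  + (real (2*k+1) + 1) / (real (2*k+1) - 1)^2 * a_fun (2*k+1) \<kappa> ^ 3)
          \<sim>[at_top] (\<lambda>k. -3 * s * real (2*k+1) powr (-3/4) + s^3 * real (2*k+1) powr (-1/4))"
    by (rule asymp_equiv_compose' [OF _ filterlim_subseq]) (simp add: strict_mono_def)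
  moreover have "\<forall>\<^sub>F k in at_top. (-3) / (real (2*k+1) - 1) * a_fun (2*k+1) \<kappa>
                  + (real (2*k+1) + 1) / (real (2*k+1) - 1)^2 * a_fun (2*k+1) \<kappa> ^ 3
      = emp_mean (\<lambda>x. x^3) (data_set (2*k+1) (a_fun (2*k+1) \<kappa>) (b (2*k+1)))"
    using second_moment eventually_gt_at_top [of 0]
    by eventually_elim (simp add: emp_mean_cube_data_set)
  ultimately show ?thesis
    unfolding s_cube unfolding s_def by (rule asymp_equiv_transfer) simp
qed

theorem proposition2:
  shows "(\<forall>(N::nat) (\<kappa>::real) (a::real) (b::real).
            odd N \<and> N \<ge> 5 \<and> a > 0
            \<and> emp_mean (\<lambda>x. x) (data_set N a b) = 0
            \<and> emp_mean (\<lambda>x. x^2) (data_set N a b) = 1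
            \<and> emp_mean (\<lambda>x. x^4) (data_set N a b) = \<kappa>
          \<longrightarrow> emp_mean (\<lambda>x. x^3) (data_set N a b)
                = (-3) / (real N - 1) * a + (real N + 1) / (real N - 1)^2 * a^3)
       \<and> (\<forall>(\<kappa>::real) (b::nat \<Rightarrow> real).
            \<kappa> > 1
            \<and> (\<forall>\<^sub>F k in at_top.
                 emp_mean (\<lambda>x. x) (data_set (2*k+1) (a_fun (2*k+1) \<kappa>) (b (2*k+1))) = 0
               \<and> emp_mean (\<lambda>x. x^2) (data_set (2*k+1) (a_fun (2*k+1) \<kappa>) (b (2*k+1))) = 1
               \<and> emp_mean (\<lambda>x. x^4) (data_set (2*k+1) (a_fun (2*k+1) \<kappa>) (b (2*k+1))) = \<kappa>)
          \<longrightarrow> (\<lambda>k::nat. emp_mean (\<lambda>x. x^3)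
                          (data_set (2*k+1) (a_fun (2*k+1) \<kappa>) (b (2*k+1))))
              \<sim>[at_top]
              (\<lambda>k::nat. -3 * (\<kappa> - 1) powr (1/4) * real (2*k+1) powr (-3/4)
                        + (\<kappa> - 1) powr (3/4) * real (2*k+1) powr (-1/4)))"
  by (intro conjI allI impI; elim conjE; (rule emp_mean_cube_data_set_a_fun_asymp_equiv)?)
    (auto simp: emp_mean_cube_data_set elim: eventually_mono)

end
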